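(* For a tournament $\mathrel{W}$ on $\mathcal{X}$, the following are equivalent: (1) $\mathrel{W}$ is not a ranking (i.e. is not transitive); (2) for some ranking $\succ$ on $\mathcal{X}$ (the chair's preference), the chair benefits from agenda-setting under $\mathrel{W}$; (3) for every ranking $\succ$ on $\mathcal{X}$, the chair benefits from agenda-setting under $\mathrel{W}$.
   Context: Let $\mathcal{X}$ be a finite set of alternatives. A proto-ranking is an irreflexive transitive relation; a ranking is a total proto-ranking; a tournament is a total asymmetric relation on $\mathcal{X}$. Interaction: given a tournament $\mathrel{W}$, start from $R_0=\varnothing$; in each period with $R_{t-1}$ not total the chair offers a pair $\{x,y\}$ unranked by $R_{t-1}$, the winner is $x$ if $x\mathrel{W}y$ and $y$ otherwise, and $R_t$ is the transitive closure of $R_{t-1}\cup\{(\text{winner},\text{loser})\}$; stop when $R_t$ is total. A strategy assigns to each non-terminal history a pair unranked at it; its outcome under $\mathrel{W}$ is the final ranking. A ranking is $\mathrel{W}$-feasible if it is the outcome under $\mathrel{W}$ of some strategy. Given the chair's preference $\succ$ (a ranking), $R$ is more aligned with $\succ$ than $R'$ if for all $x\succ y$, $xR'y$ implies $xRy$; a ranking is $\mathrel{W}$-unimprovable if no other $\mathrel{W}$-feasible ranking is more aligned with $\succ$. Given $\succ$, the chair benefits from agenda-setting under $\mathrel{W}$ if there exists a $\mathrel{W}$-feasible ranking that is not $\mathrel{W}$-unimprovable. *)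

theory Defs
  imports Main
begin

definition proto_ranking :: "'a set \<Rightarrow> ('a \<times> 'a) set \<Rightarrow> bool" where
  "proto_ranking X R \<longleftrightarrow> R \<subseteq> X \<times> X \<and> irrefl R \<and> trans R"

definition total_rel :: "'a set \<Rightarrow> ('a \<times> 'a) set \<Rightarrow> bool" where
  "total_rel X R \<longleftrightarrow> (\<forall>x\<in>X. \<forall>y\<in>X. x \<noteq> y \<longrightarrow> (x, y) \<in> R \<or> (y, x) \<in> R)"

definition ranking :: "'a set \<Rightarrow> ('a \<times> 'a) set \<Rightarrow> bool" where
  "ranking X R \<longleftrightarrow> proto_ranking X R \<and> total_rel X R"

definition tournament :: "'a set \<Rightarrow> ('a \<times> 'a) set \<Rightarrow> bool" where
  "tournament X W \<longleftrightarrow> W \<subseteq> X \<times> X \<and> total_rel X W \<and>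
     (\<forall>x y. (x, y) \<in> W \<longrightarrow> (y, x) \<notin> W)"

definition unranked :: "'a set \<Rightarrow> ('a \<times> 'a) set \<Rightarrow> 'a \<times> 'a \<Rightarrow> bool" where
  "unranked X R p \<longleftrightarrow> fst p \<in> X \<and> snd p \<in> X \<and> fst p \<noteq> snd p \<and>
     p \<notin> R \<and> prod.swap p \<notin> R"

(* A history is the list of recorded (winner, loser) results so far;
   its state is the transitive closure of these results (R_0 = {}). *)
definition hist_state :: "('a \<times> 'a) list \<Rightarrow> ('a \<times> 'a) set" where
  "hist_state h = trancl (set h)"

definition valid_history :: "'a set \<Rightarrow> ('a \<times> 'a) list \<Rightarrow> bool" where
  "valid_history X h \<longleftrightarrow> (\<forall>i < length h. unranked X (hist_state (take i h)) (h ! i))"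

definition nonterminal_history :: "'a set \<Rightarrow> ('a \<times> 'a) list \<Rightarrow> bool" where
  "nonterminal_history X h \<longleftrightarrow> valid_history X h \<and> \<not> total_rel X (hist_state h)"

(* a strategy offers, at each non-terminal history, a pair (x,y) (standing for {x,y})
   that is unranked there *)
definition strategy :: "'a set \<Rightarrow> (('a \<times> 'a) list \<Rightarrow> 'a \<times> 'a) \<Rightarrow> bool" where
  "strategy X \<sigma> \<longleftrightarrow> (\<forall>h. nonterminal_history X h \<longrightarrow> unranked X (hist_state h) (\<sigma> h))"

definition winner_loser :: "('a \<times> 'a) set \<Rightarrow> 'a \<times> 'a \<Rightarrow> 'a \<times> 'a" where
  "winner_loser W p = (if p \<in> W then p else prod.swap p)"

fun run :: "('a \<times> 'a) set \<Rightarrow> (('a \<times> 'a) list \<Rightarrow> 'a \<times> 'a) \<Rightarrow> nat \<Rightarrow> ('a \<times> 'a) list" where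
  "run W \<sigma> 0 = []"
| "run W \<sigma> (Suc t) = run W \<sigma> t @ [winner_loser W (\<sigma> (run W \<sigma> t))]"

definition outcome :: "'a set \<Rightarrow> ('a \<times> 'a) set \<Rightarrow> (('a \<times> 'a) list \<Rightarrow> 'a \<times> 'a) \<Rightarrow> ('a \<times> 'a) set \<Rightarrow> bool" where
  "outcome X W \<sigma> R \<longleftrightarrow> (\<exists>n. total_rel X (hist_state (run W \<sigma> n)) \<and>
      (\<forall>m < n. \<not> total_rel X (hist_state (run W \<sigma> m))) \<and> R = hist_state (run W \<sigma> n))"

definition feasible :: "'a set \<Rightarrow> ('a \<times> 'a) set \<Rightarrow> ('a \<times> 'a) set \<Rightarrow> bool" where
  "feasible X W R \<longleftrightarrow> ranking X R \<and> (\<exists>\<sigma>. strategy X \<sigma> \<and> outcome X W \<sigma> R)"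

definition more_aligned :: "('a \<times> 'a) set \<Rightarrow> ('a \<times> 'a) set \<Rightarrow> ('a \<times> 'a) set \<Rightarrow> bool" where
  "more_aligned P R R' \<longleftrightarrow> (\<forall>x y. (x, y) \<in> P \<longrightarrow> (x, y) \<in> R' \<longrightarrow> (x, y) \<in> R)"

definition unimprovable :: "'a set \<Rightarrow> ('a \<times> 'a) set \<Rightarrow> ('a \<times> 'a) set \<Rightarrow> ('a \<times> 'a) set \<Rightarrow> bool" where
  "unimprovable X W P R \<longleftrightarrow> \<not> (\<exists>R'. feasible X W R' \<and> R' \<noteq> R \<and> more_aligned P R' R)"

definition benefits :: "'a set \<Rightarrow> ('a \<times> 'a) set \<Rightarrow> ('a \<times> 'a) set \<Rightarrow> bool" where
  "benefits X W P \<longleftrightarrow> (\<exists>R. feasible X W R \<and> \<not> unimprovable X W P R)"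

end

(* Every Hamiltonian path of the majority tournament W is a feasible ranking: the chair
   offers the consecutive pairs of the path one after the other.  If W is transitive, every
   recorded result agrees with W, so W is the only feasible ranking and the agenda is
   irrelevant.  If W is intransitive, we find, for any preference P, two Hamiltonian paths
   with distinct rankings, the second more aligned with P, by induction on X after removing
   a P-maximal alternative x.  A Hamiltonian path of X - {x} either splits into the
   alternatives beating x followed by those beaten by x, and then x is inserted at the split
   point; or it has a block b, starting with an alternative beaten by x and ending with one
   beating x, such that x can be inserted both just before and just after b, and inserting
   it before b is more aligned with P.  If W is intransitive on X - {x}, the pair of paths
   obtained by induction either lifts by inserting x at both split points, or one of them
   has a block.  If W is transitive on X - {x}, its Hamiltonian path must have a block,
   since otherwise W would be transitive on X. *)

theory Submission
  imports Defs
begin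

fun ranking_of_list :: "'a list \<Rightarrow> ('a \<times> 'a) set" where
  "ranking_of_list [] = {}"
| "ranking_of_list (x # xs) = {x} \<times> set xs \<union> ranking_of_list xs"

lemma ranking_of_list_append:
  "ranking_of_list (xs @ ys) = ranking_of_list xs \<union> set xs \<times> set ys \<union> ranking_of_list ys"
  by (induction xs) auto

lemma ranking_of_list_subset: "ranking_of_list xs \<subseteq> set xs \<times> set xs"
  by (induction xs) auto

lemma ranking_ranking_of_list:
  assumes "distinct xs"
  shows "ranking (set xs) (ranking_of_list xs)"
proof -
  have "irrefl (ranking_of_list xs) \<and> trans (ranking_of_list xs)"
    using assms by (induction xs) (auto simp: irrefl_def trans_def dest: subsetD[OF ranking_of_list_subset])
  moreover have "total_rel (set xs) (ranking_of_list xs)"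
    unfolding total_rel_def by (induction xs) auto
  ultimately show ?thesis
    using ranking_of_list_subset unfolding ranking_def proto_ranking_def by blast
qed

fun adjacent_pairs :: "'a list \<Rightarrow> ('a \<times> 'a) list" where
  "adjacent_pairs (x # y # xs) = (x, y) # adjacent_pairs (y # xs)"
| "adjacent_pairs _ = []"

lemma adjacent_pairs_snoc:
  "adjacent_pairs (xs @ [z]) = adjacent_pairs xs @ (if xs = [] then [] else [(last xs, z)])"
  by (induction xs rule: adjacent_pairs.induct) auto

lemma set_adjacent_pairs_subset:
  "successively (\<lambda>u v. (u, v) \<in> W) xs \<Longrightarrow> set (adjacent_pairs xs) \<subseteq> W"
  by (induction xs rule: adjacent_pairs.induct) auto

lemma trancl_adjacent_pairs:
  assumes "distinct xs"
  shows "(set (adjacent_pairs xs))\<^sup>+ = ranking_of_list xs"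
proof
  have "set (adjacent_pairs xs) \<subseteq> ranking_of_list xs"
    by (induction xs rule: adjacent_pairs.induct) auto
  moreover have "trans (ranking_of_list xs)"
    using ranking_ranking_of_list[OF assms] unfolding ranking_def proto_ranking_def by blast
  ultimately show "(set (adjacent_pairs xs))\<^sup>+ \<subseteq> ranking_of_list xs"
    by (metis trancl_id trancl_mono_subset)
  show "ranking_of_list xs \<subseteq> (set (adjacent_pairs xs))\<^sup>+"
  proof (induction xs rule: adjacent_pairs.induct)
    case (1 x y xs)
    have "(set (adjacent_pairs (y # xs)))\<^sup>+ \<subseteq> (set (adjacent_pairs (x # y # xs)))\<^sup>+"
      by (rule trancl_mono_subset) auto
    with 1 show ?case
      by (auto intro: trancl_into_trancl2)
  qed auto
qed

lemma unranked_swap [simp]: "unranked X R (prod.swap p) \<longleftrightarrow> unranked X R p"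
  unfolding unranked_def by (cases p) auto

lemma valid_history_snoc:
  "valid_history X h \<Longrightarrow> unranked X (hist_state h) p \<Longrightarrow> valid_history X (h @ [p])"
  unfolding valid_history_def by (auto simp: nth_append less_Suc_eq)

lemma length_run [simp]: "length (run W \<sigma> t) = t"
  by (induction t) auto

lemma valid_history_run:
  assumes "strategy X \<sigma>" and "\<forall>m<n. \<not> total_rel X (hist_state (run W \<sigma> m))" and "t \<le> n"
  shows "valid_history X (run W \<sigma> t)"
  using \<open>t \<le> n\<close>
proof (induction t)
  case 0
  then show ?case by (simp add: valid_history_def)
next
  case (Suc t)
  then have "nonterminal_history X (run W \<sigma> t)"
    using assms(2) unfolding nonterminal_history_def by simp
  then have "unranked X (hist_state (run W \<sigma> t)) (\<sigma> (run W \<sigma> t))"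
    using assms(1) unfolding strategy_def by blast
  then have "unranked X (hist_state (run W \<sigma> t)) (winner_loser W (\<sigma> (run W \<sigma> t)))"
    by (simp add: winner_loser_def)
  with Suc show ?case
    by (simp add: valid_history_snoc)
qed

lemma unranked_offer_run:
  assumes "strategy X \<sigma>" and "\<forall>m<n. \<not> total_rel X (hist_state (run W \<sigma> m))" and "t < n"
  shows "unranked X (hist_state (run W \<sigma> t)) (\<sigma> (run W \<sigma> t))"
  using assms valid_history_run[OF assms(1,2), of t]
  unfolding strategy_def nonterminal_history_def by simp

lemma winner_loser_mem:
  assumes "tournament X W" and "unranked X R p"
  shows "winner_loser W p \<in> W"
  using assms unfolding tournament_def total_rel_def unranked_def winner_loser_def
  by (cases p) auto

lemma set_run_subset:
  assumes "tournament X W" and "strategy X \<sigma>"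
    and "\<forall>m<n. \<not> total_rel X (hist_state (run W \<sigma> m))"
  shows "set (run W \<sigma> n) \<subseteq> W"
proof -
  have "set (run W \<sigma> t) \<subseteq> W" if "t \<le> n" for t
    using that
    by (induction t) (auto intro: winner_loser_mem[OF assms(1) unranked_offer_run[OF assms(2,3)]])
  then show ?thesis by simp
qed

lemma feasible_eq_if_ranking:
  assumes "tournament X W" and "ranking X W" and "feasible X W R"
  shows "R = W"
proof -
  obtain \<sigma> n where "strategy X \<sigma>" and total: "total_rel X R"
    and "\<forall>m<n. \<not> total_rel X (hist_state (run W \<sigma> m))" and "R = (set (run W \<sigma> n))\<^sup>+"
    using assms(3) unfolding feasible_def outcome_def hist_state_def by blast
  then have "R \<subseteq> W"
    using set_run_subset[OF assms(1)] assms(2) unfolding ranking_def proto_ranking_def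
    by (metis trancl_id trancl_mono_subset)
  moreover have "(u, v) \<in> R" if "(u, v) \<in> W" for u v
  proof -
    have "u \<in> X" "v \<in> X" "u \<noteq> v" "(v, u) \<notin> W"
      using that assms(1) unfolding tournament_def by auto
    then show ?thesis
      using \<open>R \<subseteq> W\<close> total unfolding total_rel_def by blast
  qed
  ultimately show ?thesis by auto
qed

definition hamiltonian_path :: "'a set \<Rightarrow> ('a \<times> 'a) set \<Rightarrow> 'a list \<Rightarrow> bool" where
  "hamiltonian_path X W xs \<longleftrightarrow> distinct xs \<and> set xs = X \<and> successively (\<lambda>u v. (u, v) \<in> W) xs"

(* At a history of length t, offer the t-th consecutive pair of xs; the SOME branch only
   matters off the path, where a strategy must still offer some unranked pair. *)
definition path_strategy :: "'a set \<Rightarrow> 'a list \<Rightarrow> ('a \<times> 'a) list \<Rightarrow> 'a \<times> 'a" where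
  "path_strategy X xs h =
     (let p = (xs ! length h, xs ! Suc (length h))
      in if unranked X (hist_state h) p then p else SOME p. unranked X (hist_state h) p)"

lemma strategy_path_strategy: "strategy X (path_strategy X xs)"
  unfolding strategy_def
proof (intro allI impI)
  fix h assume "nonterminal_history X h"
  then obtain u v where "unranked X (hist_state h) (u, v)"
    unfolding nonterminal_history_def total_rel_def unranked_def by auto
  then show "unranked X (hist_state h) (path_strategy X xs h)"
    unfolding path_strategy_def Let_def by (auto intro: someI)
qed

lemma run_path_strategy:
  assumes "hamiltonian_path X W xs" and "t \<le> length xs - 1" \<comment> \<open>allows t = 0 when xs = []\<close>
  shows "run W (path_strategy X xs) t = adjacent_pairs (take (Suc t) xs)"
  using assms(2)
proof (induction t)
  case 0
  then show ?case by (cases xs) auto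
next
  case (Suc t)
  have distinct: "distinct xs" and "set xs = X" and path: "successively (\<lambda>u v. (u, v) \<in> W) xs"
    using assms(1) unfolding hamiltonian_path_def by auto
  have t: "Suc t < length xs" and "xs \<noteq> []"
    using Suc.prems by auto
  have "xs ! Suc t \<notin> set (take (Suc t) xs)"
    using distinct t by (auto simp: in_set_conv_nth nth_eq_iff_index_eq)
  then have "unranked X (ranking_of_list (take (Suc t) xs)) (xs ! t, xs ! Suc t)"
    using t \<open>set xs = X\<close> distinct ranking_of_list_subset[of "take (Suc t) xs"]
    by (auto simp: unranked_def nth_eq_iff_index_eq)
  moreover have "hist_state (run W (path_strategy X xs) t) = ranking_of_list (take (Suc t) xs)"
    using Suc distinct by (simp add: hist_state_def trancl_adjacent_pairs)
  ultimately have "path_strategy X xs (run W (path_strategy X xs) t) = (xs ! t, xs ! Suc t)"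
    by (simp add: path_strategy_def)
  moreover have "(xs ! t, xs ! Suc t) \<in> W"
    using successively_nth[OF path t] by simp
  moreover have "take (Suc (Suc t)) xs = take (Suc t) xs @ [xs ! Suc t]"
    using t by (rule take_Suc_conv_app_nth)
  moreover have "last (take (Suc t) xs) = xs ! t"
    using t by (subst last_conv_nth) auto
  ultimately show ?case
    using Suc t \<open>xs \<noteq> []\<close> by (simp add: winner_loser_def adjacent_pairs_snoc)
qed

lemma not_total_rel_ranking_of_list:
  "x \<in> X \<Longrightarrow> y \<in> X \<Longrightarrow> x \<noteq> y \<Longrightarrow> y \<notin> set ys \<Longrightarrow> \<not> total_rel X (ranking_of_list ys)"
  using ranking_of_list_subset[of ys] unfolding total_rel_def by blast

lemma feasible_ranking_of_hamiltonian_path: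
  assumes "hamiltonian_path X W xs"
  shows "feasible X W (ranking_of_list xs)"
proof -
  have distinct: "distinct xs" and set_xs: "set xs = X"
    using assms unfolding hamiltonian_path_def by auto
  define n where "n = length xs - 1"
  have hist_state_run: "hist_state (run W (path_strategy X xs) m) = ranking_of_list (take (Suc m) xs)"
    if "m \<le> n" for m
    using run_path_strategy[OF assms] that distinct
    unfolding n_def by (simp add: hist_state_def trancl_adjacent_pairs)
  have "outcome X W (path_strategy X xs) (ranking_of_list xs)"
    unfolding outcome_def
  proof (intro exI conjI allI impI)
    show "ranking_of_list xs = hist_state (run W (path_strategy X xs) n)"
      using hist_state_run[of n] unfolding n_def by simp
    then show "total_rel X (hist_state (run W (path_strategy X xs) n))"
      using ranking_ranking_of_list[OF distinct] set_xs unfolding ranking_def by simp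
  next
    fix m assume "m < n"
    then have "0 < length xs" "Suc m < length xs"
      unfolding n_def by auto
    then have "xs ! 0 \<in> X" "xs ! Suc m \<in> X"
      using set_xs by auto
    moreover have "xs ! 0 \<noteq> xs ! Suc m" "xs ! Suc m \<notin> set (take (Suc m) xs)"
      using distinct \<open>0 < length xs\<close> \<open>Suc m < length xs\<close>
      by (auto simp: in_set_conv_nth nth_eq_iff_index_eq)
    ultimately show "\<not> total_rel X (hist_state (run W (path_strategy X xs) m))"
      using hist_state_run \<open>m < n\<close> not_total_rel_ranking_of_list by simp
  qed
  then show ?thesis
    using strategy_path_strategy ranking_ranking_of_list[OF distinct] set_xs
    unfolding feasible_def by blast
qed

lemma split_or_block:
  obtains (split) xs ys where "l = xs @ ys" "\<forall>u\<in>set xs. f u" "\<forall>u\<in>set ys. \<not> f u"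
  | (block) a b c where "l = a @ b @ c" "b \<noteq> []" "\<forall>u\<in>set a. f u" "\<not> f (hd b)" "f (last b)"
      "\<forall>u\<in>set c. \<not> f u"
proof (cases "\<forall>u\<in>set (dropWhile f l). \<not> f u")
  case True
  then show ?thesis
    using split[of "takeWhile f l" "dropWhile f l"] by (auto dest: set_takeWhileD)
next
  case False
  define r where "r = dropWhile f l"
  define b where "b = rev (dropWhile (\<lambda>u. \<not> f u) (rev r))"
  define c where "c = rev (takeWhile (\<lambda>u. \<not> f u) (rev r))"
  have "r = b @ c"
    unfolding b_def c_def by (metis rev_append takeWhile_dropWhile_id rev_rev_ident)
  moreover have "b \<noteq> []"
    using False unfolding b_def r_def by auto
  moreover have "\<not> f (hd b)"
    using \<open>r = b @ c\<close> \<open>b \<noteq> []\<close> hd_dropWhile[of f l] unfolding r_def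
    by (metis append_is_Nil_conv hd_append2)
  moreover have "f (last b)"
    using \<open>b \<noteq> []\<close> hd_dropWhile[of "\<lambda>u. \<not> f u" "rev r"] unfolding b_def
    by (simp add: last_rev)
  moreover have "\<forall>u\<in>set c. \<not> f u"
    unfolding c_def by (auto dest: set_takeWhileD)
  moreover have "l = takeWhile f l @ r"
    unfolding r_def by simp
  ultimately show ?thesis
    using block[of "takeWhile f l" b c] by (auto dest: set_takeWhileD)
qed

lemma hamiltonian_path_insert:
  assumes "hamiltonian_path X W (xs @ ys)" and "x \<notin> X"
    and "xs \<noteq> [] \<Longrightarrow> (last xs, x) \<in> W" and "ys \<noteq> [] \<Longrightarrow> (x, hd ys) \<in> W"
  shows "hamiltonian_path (insert x X) W (xs @ x # ys)"
  using assms unfolding hamiltonian_path_def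
  by (auto simp: successively_append_iff successively_Cons)

lemma hamiltonian_path_insert_cases [consumes 3, case_names split block]:
  assumes path: "hamiltonian_path X W l" and "x \<notin> X" and total: "total_rel (insert x X) W"
  obtains (split) xs ys where "l = xs @ ys" "\<forall>u\<in>set xs. (u, x) \<in> W" "\<forall>u\<in>set ys. (x, u) \<in> W"
      "hamiltonian_path (insert x X) W (xs @ x # ys)"
  | (block) a b c where "l = a @ b @ c" "b \<noteq> []"
      "hamiltonian_path (insert x X) W (a @ x # b @ c)" "hamiltonian_path (insert x X) W (a @ b @ x # c)"
proof -
  have beats_x: "(x, u) \<in> W" if "u \<in> X" "(u, x) \<notin> W" for u
    using that total \<open>x \<notin> X\<close> unfolding total_rel_def by auto
  have set_l: "set l = X"
    using path unfolding hamiltonian_path_def by blast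
  show ?thesis
  proof (cases l "\<lambda>u. (u, x) \<in> W" rule: split_or_block)
    case (split xs ys)
    then show ?thesis
      using that(1) hamiltonian_path_insert[of X W xs ys x] path \<open>x \<notin> X\<close> beats_x set_l
      by (metis Un_iff hd_in_set last_in_set set_append)
  next
    case (block a b c)
    have "hamiltonian_path (insert x X) W (a @ x # b @ c)"
      using hamiltonian_path_insert[of X W a "b @ c" x] path \<open>x \<notin> X\<close> block beats_x set_l
      by (auto simp: last_in_set)
    moreover have "hamiltonian_path (insert x X) W ((a @ b) @ x # c)"
      using hamiltonian_path_insert[of X W "a @ b" c x] path \<open>x \<notin> X\<close> block beats_x set_l
      by auto
    ultimately show ?thesis
      using that(2) block by simp
  qed
qed

lemma hamiltonian_path_exists:
  assumes "finite X" and "total_rel X W"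
  obtains xs where "hamiltonian_path X W xs"
  using assms
proof (induction X arbitrary: thesis rule: finite_induct)
  case empty
  then show ?case by (simp add: hamiltonian_path_def)
next
  case (insert x X)
  have "total_rel X W"
    using insert.prems(2) unfolding total_rel_def by blast
  then obtain l where "hamiltonian_path X W l"
    using insert.IH by blast
  then show ?case
    using hamiltonian_path_insert_cases insert by metis
qed

lemma ranking_of_list_move_before_block:
  assumes "distinct (a @ b @ x # c)" and "b \<noteq> []"
  shows "ranking_of_list (a @ x # b @ c) \<noteq> ranking_of_list (a @ b @ x # c)"
proof -
  have "(x, hd b) \<in> ranking_of_list (a @ x # b @ c)"
    using assms(2) by (simp add: ranking_of_list_append)
  moreover have "(x, hd b) \<notin> ranking_of_list (a @ b @ x # c)"
  proof -
    have "hd b \<in> set b"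
      using assms(2) by simp
    then have "hd b \<notin> set c" "hd b \<noteq> x"
      using assms(1) by auto
    then show ?thesis
      using assms ranking_of_list_subset[of a] ranking_of_list_subset[of b] ranking_of_list_subset[of c]
      by (auto simp: ranking_of_list_append)
  qed
  ultimately show ?thesis by blast
qed

lemma more_aligned_move_before_block:
  assumes "\<forall>u\<in>set b. (u, x) \<notin> P"
  shows "more_aligned P (ranking_of_list (a @ x # b @ c)) (ranking_of_list (a @ b @ x # c))"
  using assms unfolding more_aligned_def by (auto simp: ranking_of_list_append)

lemma ex_maximal:
  assumes "finite X" and "X \<noteq> {}" and "irrefl P" and "trans P"
  obtains x where "x \<in> X" and "\<forall>y\<in>X. (y, x) \<notin> P"
proof -
  have "acyclic (P \<inter> X \<times> X)"
  proof -
    have "irrefl (P\<^sup>+)" using assms(3,4) by simp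
    then show ?thesis by (meson acyclic_irrefl acyclic_subset inf_le1)
  qed
  then have "wf (P \<inter> X \<times> X)"
    using assms(1) by (blast intro: finite_acyclic_wf)
  moreover obtain x0 where "x0 \<in> X"
    using assms(2) by blast
  ultimately obtain x where "x \<in> X" and "\<And>y. (y, x) \<in> P \<inter> X \<times> X \<Longrightarrow> y \<notin> X"
    by (metis wfE_min)
  then show ?thesis
    using that by blast
qed

lemma ranking_of_list_subset_if_trans_on:
  assumes "hamiltonian_path X W xs" and "trans_on X W"
  shows "ranking_of_list xs \<subseteq> W"
proof -
  have distinct: "distinct xs" and "set xs = X" and "successively (\<lambda>u v. (u, v) \<in> W) xs"
    using assms(1) unfolding hamiltonian_path_def by auto
  then have "set (adjacent_pairs xs) \<subseteq> W \<inter> X \<times> X"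
    using set_adjacent_pairs_subset r_into_trancl[of _ _ "set (adjacent_pairs xs)"]
      ranking_of_list_subset[of xs] by (fastforce simp: trancl_adjacent_pairs)
  moreover have "trans (W \<inter> X \<times> X)"
    using assms(2) unfolding trans_on_def trans_def by blast
  ultimately have "(set (adjacent_pairs xs))\<^sup>+ \<subseteq> W \<inter> X \<times> X"
    by (metis trancl_id trancl_mono_subset)
  then show ?thesis
    using trancl_adjacent_pairs[OF distinct] by blast
qed

lemma trans_on_insert_split:
  assumes "trans_on X W" and "asym W" and "hamiltonian_path X W (xs @ ys)"
    and "\<forall>u\<in>set xs. (u, x) \<in> W" and "\<forall>u\<in>set ys. (x, u) \<in> W"
  shows "trans_on (insert x X) W"
proof -
  have "set xs \<times> set ys \<subseteq> W"
    using ranking_of_list_subset_if_trans_on[OF assms(3,1)] by (auto simp: ranking_of_list_append)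
  moreover have "X = set xs \<union> set ys"
    using assms(3) unfolding hamiltonian_path_def by simp
  ultimately show ?thesis
    using assms(1,2,4,5) unfolding trans_on_def asym_iff by blast
qed

lemma ranking_of_list_insert_split:
  assumes "hamiltonian_path X W (xs @ ys)" and "asym W"
    and "\<forall>u\<in>set xs. (u, x) \<in> W" and "\<forall>u\<in>set ys. (x, u) \<in> W"
  shows "ranking_of_list (xs @ x # ys)
    = ranking_of_list (xs @ ys) \<union> {u \<in> X. (u, x) \<in> W} \<times> {x} \<union> {x} \<times> {u \<in> X. (x, u) \<in> W}"
  using assms unfolding hamiltonian_path_def asym_iff
  by (auto simp: ranking_of_list_append)

definition path_improvable :: "'a set \<Rightarrow> ('a \<times> 'a) set \<Rightarrow> ('a \<times> 'a) set \<Rightarrow> bool" where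
  "path_improvable X W P \<longleftrightarrow> (\<exists>xs ys. hamiltonian_path X W xs \<and> hamiltonian_path X W ys \<and>
     ranking_of_list ys \<noteq> ranking_of_list xs \<and> more_aligned P (ranking_of_list ys) (ranking_of_list xs))"

lemma path_improvable_if_block:
  assumes "b \<noteq> []" and "hamiltonian_path (insert x X) W (a @ x # b @ c)"
    and "hamiltonian_path (insert x X) W (a @ b @ x # c)" and "\<forall>u\<in>X. (u, x) \<notin> P"
  shows "path_improvable (insert x X) W P"
proof -
  have "distinct (a @ b @ x # c)" and "set b \<subseteq> X"
    using assms(3) unfolding hamiltonian_path_def by auto
  then show ?thesis
    unfolding path_improvable_def
    using assms ranking_of_list_move_before_block[of a b x c]
      more_aligned_move_before_block[of b x P a c] by blast
qed

lemma path_improvable_insert_if_trans_on: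
  assumes "finite X" and "trans_on X W" and "\<not> trans_on (insert x X) W"
    and "x \<notin> X" and "total_rel (insert x X) W" and "asym W" and "\<forall>u\<in>X. (u, x) \<notin> P"
  shows "path_improvable (insert x X) W P"
proof -
  have "total_rel X W"
    using assms(5) unfolding total_rel_def by blast
  then obtain l where l: "hamiltonian_path X W l"
    using hamiltonian_path_exists assms(1) by blast
  from l assms(4,5) show ?thesis
  proof (cases rule: hamiltonian_path_insert_cases)
    case (split xs ys)
    then have "trans_on (insert x X) W"
      using trans_on_insert_split[OF assms(2,6)] l by blast
    with assms(3) show ?thesis by blast
  next
    case (block a b c)
    show ?thesis
      by (rule path_improvable_if_block[OF block(2-4) assms(7)])
  qed
qed

lemma path_improvable_insert:
  assumes "path_improvable X W P"
    and "x \<notin> X" and "total_rel (insert x X) W" and "asym W" and "\<forall>u\<in>X. (u, x) \<notin> P"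
  shows "path_improvable (insert x X) W P"
proof -
  obtain xs ys where paths: "hamiltonian_path X W xs" "hamiltonian_path X W ys"
    and "ranking_of_list ys \<noteq> ranking_of_list xs"
    and "more_aligned P (ranking_of_list ys) (ranking_of_list xs)"
    using assms(1) unfolding path_improvable_def by blast
  from paths(1) assms(2,3) show ?thesis
  proof (cases rule: hamiltonian_path_insert_cases)
    case (split xs1 xs2)
    note xs_split = this
    from paths(2) assms(2,3) show ?thesis
    proof (cases rule: hamiltonian_path_insert_cases)
      case (split ys1 ys2)
      \<comment> \<open>inserting x at a split point adds pairs that depend only on X\<close>
      define E where "E = {u \<in> X. (u, x) \<in> W} \<times> {x} \<union> {x} \<times> {u \<in> X. (x, u) \<in> W}"
      have "ranking_of_list (xs1 @ x # xs2) = ranking_of_list xs \<union> E"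
        using ranking_of_list_insert_split[OF _ assms(4)] paths(1) xs_split
        unfolding E_def by (simp add: Un_assoc)
      moreover have "ranking_of_list (ys1 @ x # ys2) = ranking_of_list ys \<union> E"
        using ranking_of_list_insert_split[OF _ assms(4)] paths(2) split
        unfolding E_def by (simp add: Un_assoc)
      moreover have "ranking_of_list ys \<union> E \<noteq> ranking_of_list xs \<union> E"
      proof -
        have "E \<inter> X \<times> X = {}"
          using assms(2) unfolding E_def by blast
        moreover have "ranking_of_list xs \<subseteq> X \<times> X" "ranking_of_list ys \<subseteq> X \<times> X"
          using paths ranking_of_list_subset unfolding hamiltonian_path_def by metis+
        ultimately show ?thesis
          using \<open>ranking_of_list ys \<noteq> ranking_of_list xs\<close> by blast
      qed
      moreover have "more_aligned P (ranking_of_list ys \<union> E) (ranking_of_list xs \<union> E)"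
        using \<open>more_aligned P (ranking_of_list ys) (ranking_of_list xs)\<close>
        unfolding more_aligned_def by blast
      ultimately show ?thesis
        unfolding path_improvable_def using xs_split(4) split(4)
        by (intro exI[of _ "xs1 @ x # xs2"] exI[of _ "ys1 @ x # ys2"]) simp
    next
      case (block a b c)
      show ?thesis
        by (rule path_improvable_if_block[OF block(2-4) assms(5)])
    qed
  next
    case (block a b c)
    show ?thesis
      by (rule path_improvable_if_block[OF block(2-4) assms(5)])
  qed
qed

lemma path_improvable_if_not_trans_on:
  assumes "finite X" and "total_rel X W" and "asym W" and "\<not> trans_on X W"
    and "irrefl P" and "trans P"
  shows "path_improvable X W P"
  using assms(1,2,4)
proof (induction X rule: finite_psubset_induct)
  case (psubset X)
  have "X \<noteq> {}"
    using psubset.prems(2) by (auto simp: trans_on_def)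
  then obtain x where "x \<in> X" and x_max: "\<forall>y\<in>X. (y, x) \<notin> P"
    using ex_maximal psubset.hyps assms(5,6) by metis
  define X' where "X' = X - {x}"
  have X: "X = insert x X'" and "x \<notin> X'" and "X' \<subset> X" and "\<forall>y\<in>X'. (y, x) \<notin> P"
    using \<open>x \<in> X\<close> x_max unfolding X'_def by auto
  have "finite X'"
    using psubset.hyps unfolding X'_def by blast
  show ?case
  proof (cases "trans_on X' W")
    case True
    then show ?thesis
      using path_improvable_insert_if_trans_on[OF \<open>finite X'\<close> True _ \<open>x \<notin> X'\<close> _ assms(3)]
        psubset.prems \<open>\<forall>y\<in>X'. (y, x) \<notin> P\<close> unfolding X by blast
  next
    case False
    have "total_rel X' W"
      using psubset.prems(1) unfolding X'_def total_rel_def by blast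
    then have "path_improvable X' W P"
      using psubset.IH[OF \<open>X' \<subset> X\<close>] False by blast
    then show ?thesis
      using path_improvable_insert[OF _ \<open>x \<notin> X'\<close> _ assms(3)]
        psubset.prems(1) \<open>\<forall>y\<in>X'. (y, x) \<notin> P\<close> unfolding X by blast
  qed
qed

lemma ranking_if_trans_on:
  assumes "tournament X W" and "trans_on X W"
  shows "ranking X W"
  using assms unfolding tournament_def ranking_def proto_ranking_def trans_on_def trans_def irrefl_def
  by blast

lemma not_benefits_if_ranking:
  assumes "tournament X W" and "ranking X W"
  shows "\<not> benefits X W P"
  using feasible_eq_if_ranking[OF assms] unfolding benefits_def unimprovable_def by blast

lemma benefits_if_path_improvable:
  assumes "path_improvable X W P"
  shows "benefits X W P"
  using assms feasible_ranking_of_hamiltonian_path unfolding path_improvable_def benefits_def unimprovable_def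
  by blast

theorem proposition6:
  fixes X :: "'a set" and W :: "('a \<times> 'a) set"
  assumes "finite X" and "tournament X W"
  shows "(\<not> ranking X W \<longleftrightarrow> (\<exists>P. ranking X P \<and> benefits X W P))
       \<and> (\<not> ranking X W \<longleftrightarrow> (\<forall>P. ranking X P \<longrightarrow> benefits X W P))"
proof -
  have benefits: "benefits X W P" if "\<not> ranking X W" and "ranking X P" for P
  proof (rule benefits_if_path_improvable, rule path_improvable_if_not_trans_on)
    show "total_rel X W" "asym W"
      using assms(2) unfolding tournament_def asym_iff by auto
    show "\<not> trans_on X W"
      using that(1) ranking_if_trans_on[OF assms(2)] by blast
    show "irrefl P" "trans P"
      using that(2) unfolding ranking_def proto_ranking_def by auto
  qed (rule assms(1))
  obtain xs where "distinct xs" and "set xs = X"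
    using finite_distinct_list[OF assms(1)] by blast
  then have "ranking X (ranking_of_list xs)"
    using ranking_ranking_of_list by blast
  then show ?thesis
    using benefits not_benefits_if_ranking[OF assms(2)] by blast
qed

end
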